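(* Let $X$ be a locally path connected and semilocally simply connected space. Then the CO' topology on $\Pi_1(X)$ is coarser than the UC topology, i.e. every CO'-open subset of $\Pi_1(X)$ is UC-open. More precisely, for every CO'-open set $M\subseteq\Pi_1(X)$ and every $[\alpha]\in M$ there are open neighbourhoods $V^1$ of $\alpha(1)$ and $V^0$ of $\alpha(0)$ in $X$ with $N([\alpha],V^1,V^0)\subseteq M$.
   Context: For a space $X$, $\mathcal P X=C([0,1],X)$ is the set of paths, with the compact-open topology. For paths $\gamma,\eta$ with $\gamma(0)=\eta(1)$, $\gamma\,\Box\,\eta$ denotes the concatenated path which first traverses $\eta$ and then $\gamma$; $[\gamma]$ denotes the endpoint-fixing path-homotopy class of $\gamma$, and $\Pi_1(X)$ is the set of all such classes. A subset $V\subseteq X$ is relatively inessential if for $x\in V$ the homomorphism $\pi_1(V,x)\to\pi_1(X,x)$ induced by inclusion is trivial; $X$ is semilocally simply connected if every point has a relatively inessential neighbourhood. The CO' topology on $\Pi_1(X)$ is the quotient topology induced from $\mathcal P X$ by $q\colon\gamma\mapsto[\gamma]$. For $[\gamma]\in\Pi_1(X)$ and open sets $U\ni\gamma(1)$, $V\ni\gamma(0)$, let $N([\gamma],U,V)=\{[\delta\,\Box\,\gamma\,\Box\,\theta] : \delta\text{ a path in }U\text{ with }\delta(0)=\gamma(1),\ \theta\text{ a path in }V\text{ with }\theta(1)=\gamma(0)\}$. The UC topology is the topology generated by the sets $N([\gamma],U,V)$ with $U,V$ path connected relatively inessential open neighbourhoods of $\gamma(1)$, $\gamma(0)$. *)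

theory Defs
  imports "HOL-Analysis.Analysis"
begin

text \<open>The space X is the whole carrier of a topological_space type 'a.
  Paths are maps real => 'a continuous on [0,1] (library notion path);
  only their values on [0,1] matter.\<close>

definition path_space :: "(real \<Rightarrow> 'a::topological_space) set" where
  "path_space = {g. path g}"

definition compact_open_path_topology :: "(real \<Rightarrow> 'a::topological_space) topology" where
  "compact_open_path_topology =
     topology_generated_by
       {{g. path g \<and> g ` K \<subseteq> U} | K U. compact K \<and> K \<subseteq> {0..1} \<and> open U}"

definition path_class :: "(real \<Rightarrow> 'a::topological_space) \<Rightarrow> (real \<Rightarrow> 'a) set" where
  "path_class g = {h. homotopic_paths UNIV g h}"

definition Pi1 :: "(real \<Rightarrow> 'a::topological_space) set set" where
  "Pi1 = {path_class g | g. path g}"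

text \<open>Relatively inessential subsets and semilocal simple connectivity.
  pi_1(V,x) -> pi_1(X,x) trivial: every loop in V at x is null-homotopic in X.\<close>
definition rel_inessential :: "'a::topological_space set \<Rightarrow> bool" where
  "rel_inessential V \<longleftrightarrow>
     (\<forall>x\<in>V. \<forall>p. path p \<and> path_image p \<subseteq> V \<and> pathstart p = x \<and> pathfinish p = x
        \<longrightarrow> homotopic_paths UNIV p (\<lambda>t. x))"

definition semilocally_simply_connected :: "'a::topological_space itself \<Rightarrow> bool" where
  "semilocally_simply_connected TYPE('a) \<longleftrightarrow>
     (\<forall>x::'a. \<exists>V. open V \<and> x \<in> V \<and> rel_inessential V)"

definition CO'_open :: "(real \<Rightarrow> 'a::topological_space) set set \<Rightarrow> bool" where
  "CO'_open M \<longleftrightarrow> M \<subseteq> Pi1 \<and>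
     openin compact_open_path_topology {g \<in> path_space. path_class g \<in> M}"

text \<open>N([g],U,V) = {[delta box g box theta]}; delta box g box theta first traverses theta,
  then g, then delta, i.e. (theta +++ g) +++ delta.\<close>
definition Nbhd :: "(real \<Rightarrow> 'a::topological_space) \<Rightarrow> 'a set \<Rightarrow> 'a set \<Rightarrow> (real \<Rightarrow> 'a) set set" where
  "Nbhd g U V =
     {path_class ((\<theta> +++ g) +++ \<delta>) | \<delta> \<theta>.
        path \<delta> \<and> path_image \<delta> \<subseteq> U \<and> pathstart \<delta> = pathfinish g \<and>
        path \<theta> \<and> path_image \<theta> \<subseteq> V \<and> pathfinish \<theta> = pathstart g}"

definition UC_topology :: "(real \<Rightarrow> 'a::topological_space) set topology" where
  "UC_topology =
     topology_generated_by
       {Nbhd g U V | g U V. path g \<and>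
          open U \<and> pathfinish g \<in> U \<and> path_connected U \<and> rel_inessential U \<and>
          open V \<and> pathstart g \<in> V \<and> path_connected V \<and> rel_inessential V}"

end

theory Submission
  imports Defs
begin

text \<open>A CO'-open set containing [\<alpha>] contains the classes of all paths g satisfying finitely
  many compact-open constraints g(K_i) \<subseteq> U_i that \<alpha> satisfies. Let V0 (V1) be the
  intersection of the U_i with 0 \<in> K_i (1 \<in> K_i); the other K_i are closed and so avoid
  [0,\<epsilon>] ([1-\<epsilon>,1]) for small \<epsilon>. A path \<delta> \<box> \<alpha> \<box> \<theta> with \<theta> in V0 and \<delta> in V1 is
  homotopic to a reparametrisation that agrees with \<alpha> on [\<epsilon>,1-\<epsilon>] and runs through \<theta> and
  \<alpha>|[0,\<epsilon>] (resp. \<alpha>|[1-\<epsilon>,1] and \<delta>) on the end intervals; this path meets every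
  constraint, so [\<delta> \<box> \<alpha> \<box> \<theta>] lies in the set. Shrinking V0 and V1 to path connected
  relatively inessential neighbourhoods, which exist by the hypotheses on X, gives UC-openness.\<close>

lemma generate_topology_on_finite_Inter_nbhd:
  assumes "generate_topology_on \<S> A" "x \<in> A"
  obtains \<F> where "finite \<F>" "\<F> \<subseteq> \<S>" "x \<in> \<Inter>\<F>" "\<Inter>\<F> \<subseteq> A"
proof -
  obtain \<U> where \<U>: "\<And>T. T \<in> \<U> \<Longrightarrow> \<exists>\<F>. finite' \<F> \<and> \<F> \<subseteq> \<S> \<and> \<Inter>\<F> = T" "\<Union>\<U> = A"
    using assms(1) unfolding generate_topology_on_eq union_of_def intersection_of_def by auto
  then obtain T where "T \<in> \<U>" "x \<in> T"
    using assms(2) by blast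
  with \<U> show thesis
    by (metis Union_upper that)
qed

lemma joinpaths3_apply:
  "((p +++ q) +++ r) s =
     (if s \<le> 1/4 then p (4 * s) else if s \<le> 1/2 then q (4 * s - 1) else r (2 * s - 1))"
  by (simp add: joinpaths_def)

lemma path_class_eq_if_homotopic:
  "homotopic_paths UNIV g h \<Longrightarrow> path_class g = path_class h"
  unfolding path_class_def
  by (rule Collect_cong) (meson homotopic_paths_sym homotopic_paths_trans)

lemma compact_open_path_topology_finite_subbasic_nbhd:
  assumes "openin compact_open_path_topology W" "\<alpha> \<in> W"
  obtains P where "finite P"
    "\<And>K U. (K, U) \<in> P \<Longrightarrow> compact K \<and> K \<subseteq> {0..1} \<and> open U \<and> \<alpha> ` K \<subseteq> U"
    "\<And>g. path g \<Longrightarrow> (\<And>K U. (K, U) \<in> P \<Longrightarrow> g ` K \<subseteq> U) \<Longrightarrow> g \<in> W"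
proof -
  define \<S> :: "(real \<Rightarrow> 'a) set set" where
    "\<S> = {{g. path g \<and> g ` K \<subseteq> U} | K U. compact K \<and> K \<subseteq> {0..1} \<and> open U}"
  have "generate_topology_on \<S> W"
    using assms(1) unfolding compact_open_path_topology_def \<S>_def
    by (rule openin_topology_generated_by)
  then obtain \<F> where \<F>: "finite \<F>" "\<F> \<subseteq> \<S>" "\<alpha> \<in> \<Inter>\<F>" "\<Inter>\<F> \<subseteq> W"
    using assms(2) by (rule generate_topology_on_finite_Inter_nbhd)
  have "\<exists>K U. (\<forall>g. g \<in> S \<longleftrightarrow> path g \<and> g ` K \<subseteq> U) \<and> compact K \<and> K \<subseteq> {0..1} \<and> open U"
    if "S \<in> \<F>" for S
  proof -
    obtain K U where "S = {g. path g \<and> g ` K \<subseteq> U}" "compact K" "K \<subseteq> {0..1}" "open U"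
      using \<open>S \<in> \<F>\<close> \<F>(2) unfolding \<S>_def by blast
    then show ?thesis
      by (intro exI[of _ K] exI[of _ U]) simp
  qed
  then obtain \<kappa> \<upsilon> where mem: "\<And>S g. S \<in> \<F> \<Longrightarrow> g \<in> S \<longleftrightarrow> path g \<and> g ` \<kappa> S \<subseteq> \<upsilon> S"
    and \<kappa>\<upsilon>: "\<And>S. S \<in> \<F> \<Longrightarrow> compact (\<kappa> S) \<and> \<kappa> S \<subseteq> {0..1} \<and> open (\<upsilon> S)"
    by metis
  show thesis
  proof
    show "finite ((\<lambda>S. (\<kappa> S, \<upsilon> S)) ` \<F>)"
      using \<F>(1) by simp
    show "compact K \<and> K \<subseteq> {0..1} \<and> open U \<and> \<alpha> ` K \<subseteq> U"
      if KU: "(K, U) \<in> (\<lambda>S. (\<kappa> S, \<upsilon> S)) ` \<F>" for K U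
    proof -
      obtain S where "S \<in> \<F>" "K = \<kappa> S" "U = \<upsilon> S"
        using KU by blast
      moreover have "\<alpha> ` \<kappa> S \<subseteq> \<upsilon> S"
        using \<F>(3) mem[OF \<open>S \<in> \<F>\<close>, of \<alpha>] \<open>S \<in> \<F>\<close> by blast
      ultimately show ?thesis
        using \<kappa>\<upsilon> by simp
    qed
    show "g \<in> W"
      if "path g" and sub: "\<And>K U. (K, U) \<in> (\<lambda>S. (\<kappa> S, \<upsilon> S)) ` \<F> \<Longrightarrow> g ` K \<subseteq> U" for g
    proof -
      have "g \<in> S" if "S \<in> \<F>" for S
        using mem[OF that, of g] \<open>path g\<close> sub[of "\<kappa> S" "\<upsilon> S"] that by blast
      then show ?thesis
        using \<F>(4) by blast
    qed
  qed
qed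

lemma finite_constraints_nbhd_of_point:
  fixes \<alpha> :: "'b::metric_space \<Rightarrow> 'a::topological_space"
  assumes "finite P" "\<And>K U. (K, U) \<in> P \<Longrightarrow> closed K \<and> open U \<and> \<alpha> ` K \<subseteq> U"
    and "continuous_on D \<alpha>" "a \<in> D"
  obtains V e where "open V" "0 < e" "\<And>t. t \<in> D \<Longrightarrow> dist t a < e \<Longrightarrow> \<alpha> t \<in> V"
    "\<And>K U t. (K, U) \<in> P \<Longrightarrow> t \<in> K \<Longrightarrow> dist t a < e \<Longrightarrow> V \<subseteq> U"
proof -
  define V where "V = \<Inter>(snd ` {p \<in> P. a \<in> fst p})"
  define C where "C = \<Union>(fst ` {p \<in> P. a \<notin> fst p})"
  have "open V"
    using assms(1,2) unfolding V_def by (intro open_Inter) auto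
  have "closed C"
    using assms(1,2) unfolding C_def by (intro closed_Union) auto
  have "\<alpha> a \<in> V"
    using assms(2) unfolding V_def by fastforce
  obtain A where A: "open A" "a \<in> A" "\<And>t. t \<in> D \<Longrightarrow> t \<in> A \<Longrightarrow> \<alpha> t \<in> V"
    using continuous_on_topological[THEN iffD1, OF assms(3)] assms(4) \<open>open V\<close> \<open>\<alpha> a \<in> V\<close>
    by metis
  have "open (A - C)" "a \<in> A - C"
    using A \<open>closed C\<close> by (auto simp: C_def)
  then obtain e where "0 < e" and e: "ball a e \<subseteq> A - C"
    by (meson open_contains_ball)
  show thesis
  proof
    show "\<alpha> t \<in> V" if "t \<in> D" "dist t a < e" for t
      using that e A(3) by (auto simp: dist_commute)
    show "V \<subseteq> U" if "(K, U) \<in> P" "t \<in> K" "dist t a < e" for K U t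
    proof -
      have "t \<notin> C"
        using that(3) e by (auto simp: dist_commute)
      then have "a \<in> K"
        using that(1,2) unfolding C_def by force
      then show ?thesis
        using that(1) unfolding V_def by force
    qed
  qed fact+
qed

lemma compact_open_path_nbhd_near_ends:
  assumes "openin compact_open_path_topology W" "\<alpha> \<in> W" "path \<alpha>"
  obtains V0 V1 \<epsilon> where "open V0" "open V1" "0 < \<epsilon>" "\<epsilon> \<le> 1/2"
    "\<alpha> ` {0..\<epsilon>} \<subseteq> V0" "\<alpha> ` {1-\<epsilon>..1} \<subseteq> V1"
    "\<And>g. path g \<Longrightarrow> g ` {0..\<epsilon>} \<subseteq> V0 \<Longrightarrow> g ` {1-\<epsilon>..1} \<subseteq> V1 \<Longrightarrow>
          (\<And>t. \<epsilon> \<le> t \<Longrightarrow> t \<le> 1 - \<epsilon> \<Longrightarrow> g t = \<alpha> t) \<Longrightarrow> g \<in> W"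
proof -
  obtain P where "finite P"
    and P: "\<And>K U. (K, U) \<in> P \<Longrightarrow> compact K \<and> K \<subseteq> {0..1} \<and> open U \<and> \<alpha> ` K \<subseteq> U"
    and W: "\<And>g. path g \<Longrightarrow> (\<And>K U. (K, U) \<in> P \<Longrightarrow> g ` K \<subseteq> U) \<Longrightarrow> g \<in> W"
    using compact_open_path_topology_finite_subbasic_nbhd[OF assms(1,2)] by metis
  have P_closed: "closed K \<and> open U \<and> \<alpha> ` K \<subseteq> U" if "(K, U) \<in> P" for K U
    using P[OF that] compact_imp_closed by blast
  have cont: "continuous_on {0..1} \<alpha>"
    using assms(3) by (simp add: path_def)
  obtain V0 e0 where "open V0" "0 < e0" and V0: "\<And>t. t \<in> {0..1} \<Longrightarrow> dist t 0 < e0 \<Longrightarrow> \<alpha> t \<in> V0"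
    and V0_sub: "\<And>K U t. (K, U) \<in> P \<Longrightarrow> t \<in> K \<Longrightarrow> dist t 0 < e0 \<Longrightarrow> V0 \<subseteq> U"
    by (rule finite_constraints_nbhd_of_point[OF \<open>finite P\<close> P_closed cont, where a=0]) auto
  obtain V1 e1 where "open V1" "0 < e1" and V1: "\<And>t. t \<in> {0..1} \<Longrightarrow> dist t 1 < e1 \<Longrightarrow> \<alpha> t \<in> V1"
    and V1_sub: "\<And>K U t. (K, U) \<in> P \<Longrightarrow> t \<in> K \<Longrightarrow> dist t 1 < e1 \<Longrightarrow> V1 \<subseteq> U"
    by (rule finite_constraints_nbhd_of_point[OF \<open>finite P\<close> P_closed cont, where a=1]) auto
  define \<epsilon> where "\<epsilon> = min (min e0 e1 / 2) (1/2)"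
  have \<epsilon>: "0 < \<epsilon>" "\<epsilon> \<le> 1/2" "\<epsilon> < e0" "\<epsilon> < e1"
    using \<open>0 < e0\<close> \<open>0 < e1\<close> by (auto simp: \<epsilon>_def)
  have near0: "dist t 0 < e0" if "0 \<le> t" "t \<le> \<epsilon>" for t :: real
    using that \<epsilon> by (simp add: dist_real_def)
  have near1: "dist t 1 < e1" if "1 - \<epsilon> \<le> t" "t \<le> 1" for t :: real
    using that \<epsilon> by (simp add: dist_real_def)
  show thesis
  proof
    show "\<alpha> ` {0..\<epsilon>} \<subseteq> V0"
      using V0 near0 \<epsilon> by auto
    show "\<alpha> ` {1-\<epsilon>..1} \<subseteq> V1"
      using V1 near1 \<epsilon> by auto
    show "g \<in> W" if "path g" and g0: "g ` {0..\<epsilon>} \<subseteq> V0" and g1: "g ` {1-\<epsilon>..1} \<subseteq> V1"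
      and g\<alpha>: "\<And>t. \<epsilon> \<le> t \<Longrightarrow> t \<le> 1 - \<epsilon> \<Longrightarrow> g t = \<alpha> t" for g
    proof (rule W[OF \<open>path g\<close>], rule subsetI)
      fix K U y assume KU: "(K, U) \<in> P" and "y \<in> g ` K"
      then obtain t where "t \<in> K" "y = g t"
        by blast
      have t: "0 \<le> t" "t \<le> 1"
        using P[OF KU] \<open>t \<in> K\<close> by auto
      consider "t \<le> \<epsilon>" | "1 - \<epsilon> \<le> t" | "\<epsilon> \<le> t" "t \<le> 1 - \<epsilon>"
        by linarith
      then show "y \<in> U"
      proof cases
        case 1
        then have "g t \<in> V0"
          using g0 t by (auto simp: image_subset_iff)
        then show ?thesis
          using V0_sub[OF KU \<open>t \<in> K\<close> near0] 1 t \<open>y = g t\<close> by auto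
      next
        case 2
        then have "g t \<in> V1"
          using g1 t by (auto simp: image_subset_iff)
        then show ?thesis
          using V1_sub[OF KU \<open>t \<in> K\<close> near1] 2 t \<open>y = g t\<close> by auto
      next
        case 3
        then show ?thesis
          using g\<alpha> P[OF KU] \<open>t \<in> K\<close> \<open>y = g t\<close> by auto
      qed
    qed
  qed fact+
qed

text \<open>(t + 1) / 4 is the parameter at which (\<theta> +++ \<alpha>) +++ \<delta> passes through \<alpha> t; the two
  correction terms, active only on [0,\<epsilon>] and [1-\<epsilon>,1], stretch these intervals over \<theta> and \<delta>.\<close>
definition end_stretch :: "real \<Rightarrow> real \<Rightarrow> real" where
  "end_stretch \<epsilon> t = (t + 1) / 4 - max 0 (\<epsilon> - t) / (4 * \<epsilon>) + max 0 (t - (1 - \<epsilon>)) / (2 * \<epsilon>)"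

lemma end_stretch_middle:
  "\<epsilon> \<le> t \<Longrightarrow> t \<le> 1 - \<epsilon> \<Longrightarrow> 4 * end_stretch \<epsilon> t - 1 = t"
  by (simp add: end_stretch_def field_simps)

lemma end_stretch_left:
  assumes "0 < \<epsilon>" "\<epsilon> \<le> 1/2" "0 \<le> t" "t \<le> \<epsilon>"
  shows "0 \<le> end_stretch \<epsilon> t" "4 * end_stretch \<epsilon> t - 1 \<le> \<epsilon>"
proof -
  define s where "s = t / \<epsilon>"
  have "s \<le> 1" "0 \<le> s"
    using assms by (auto simp: s_def)
  have "end_stretch \<epsilon> t = (t + 1) / 4 - (\<epsilon> - t) / (4 * \<epsilon>)"
    using assms by (simp add: end_stretch_def)
  also have "\<dots> = (s + t) / 4"
    using assms by (simp add: s_def field_simps)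
  finally show "0 \<le> end_stretch \<epsilon> t" "4 * end_stretch \<epsilon> t - 1 \<le> \<epsilon>"
    using \<open>s \<le> 1\<close> \<open>0 \<le> s\<close> assms by (simp_all add: field_simps)
qed

lemma end_stretch_right:
  assumes "0 < \<epsilon>" "\<epsilon> \<le> 1/2" "1 - \<epsilon> \<le> t" "t \<le> 1"
  shows "1 - \<epsilon> \<le> 4 * end_stretch \<epsilon> t - 1" "end_stretch \<epsilon> t \<le> 1"
proof -
  define s where "s = (t - (1 - \<epsilon>)) / (2 * \<epsilon>)"
  have "0 \<le> s" "s \<le> 1/2"
    using assms by (auto simp: s_def field_simps)
  moreover have "end_stretch \<epsilon> t = (t + 1) / 4 + s"
    using assms by (simp add: end_stretch_def s_def)
  ultimately show "1 - \<epsilon> \<le> 4 * end_stretch \<epsilon> t - 1" "end_stretch \<epsilon> t \<le> 1"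
    using assms by (simp_all add: field_simps)
qed

lemma end_stretch_in_unit_interval:
  assumes "0 < \<epsilon>" "\<epsilon> \<le> 1/2" "t \<in> {0..1}"
  shows "end_stretch \<epsilon> t \<in> {0..1}"
proof -
  consider "t \<le> \<epsilon>" | "1 - \<epsilon> \<le> t" | "\<epsilon> \<le> t" "t \<le> 1 - \<epsilon>"
    by linarith
  then show ?thesis
  proof cases
    case 1
    then have "0 \<le> end_stretch \<epsilon> t" "4 * end_stretch \<epsilon> t - 1 \<le> \<epsilon>"
      using end_stretch_left[OF assms(1,2)] assms(3) by auto
    then show ?thesis
      using assms(2) by auto
  next
    case 2
    then have "1 - \<epsilon> \<le> 4 * end_stretch \<epsilon> t - 1" "end_stretch \<epsilon> t \<le> 1"
      using end_stretch_right[OF assms(1,2)] assms(3) by auto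
    then show ?thesis
      using assms(2) by auto
  next
    case 3
    then show ?thesis
      using end_stretch_middle[OF 3] assms(3) by auto
  qed
qed

lemma homotopic_paths_end_stretch:
  assumes "0 < \<epsilon>" "\<epsilon> \<le> 1/2" "path \<gamma>"
  shows "homotopic_paths UNIV \<gamma> (\<gamma> \<circ> end_stretch \<epsilon>)"
proof (rule homotopic_paths_reparametrize[OF assms(3)])
  show "continuous_on {0..1} (end_stretch \<epsilon>)"
    unfolding end_stretch_def[abs_def] using assms(1) by (intro continuous_intros) auto
  show "end_stretch \<epsilon> \<in> {0..1} \<rightarrow> {0..1}"
    using end_stretch_in_unit_interval[OF assms(1,2)] by blast
  show "end_stretch \<epsilon> 0 = 0" "end_stretch \<epsilon> 1 = 1"
    using assms(1,2) by (simp_all add: end_stretch_def)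
qed auto

lemma joinpaths3_end_stretch_left:
  assumes "0 < \<epsilon>" "\<epsilon> \<le> 1/2" "0 \<le> t" "t \<le> \<epsilon>"
  shows "((\<theta> +++ \<alpha>) +++ \<delta>) (end_stretch \<epsilon> t) \<in> path_image \<theta> \<union> \<alpha> ` {0..\<epsilon>}"
  using end_stretch_left[OF assms] assms
  by (auto simp: joinpaths3_apply path_image_def)

lemma joinpaths3_end_stretch_right:
  assumes "0 < \<epsilon>" "\<epsilon> \<le> 1/2" "1 - \<epsilon> \<le> t" "t \<le> 1"
  shows "((\<theta> +++ \<alpha>) +++ \<delta>) (end_stretch \<epsilon> t) \<in> \<alpha> ` {1-\<epsilon>..1} \<union> path_image \<delta>"
  using end_stretch_right[OF assms] assms
  by (auto simp: joinpaths3_apply path_image_def)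

lemma joinpaths3_end_stretch_middle:
  assumes "\<epsilon> \<le> t" "t \<le> 1 - \<epsilon>" "0 < \<epsilon>"
  shows "((\<theta> +++ \<alpha>) +++ \<delta>) (end_stretch \<epsilon> t) = \<alpha> t"
proof -
  have e: "4 * end_stretch \<epsilon> t - 1 = t"
    using assms(1,2) by (rule end_stretch_middle)
  then have "\<not> end_stretch \<epsilon> t \<le> 1/4" "end_stretch \<epsilon> t \<le> 1/2"
    using assms by linarith+
  then show ?thesis
    unfolding joinpaths3_apply e by simp
qed

lemma CO'_open_imp_Nbhd_subset:
  assumes "CO'_open M" "path \<alpha>" "path_class \<alpha> \<in> M"
  shows "\<exists>V1 V0. open V1 \<and> \<alpha> 1 \<in> V1 \<and> open V0 \<and> \<alpha> 0 \<in> V0 \<and> Nbhd \<alpha> V1 V0 \<subseteq> M"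
proof -
  define W where "W = {g \<in> path_space. path_class g \<in> M}"
  have "openin compact_open_path_topology W"
    using assms(1) by (simp add: CO'_open_def W_def)
  moreover have "\<alpha> \<in> W"
    using assms(2,3) by (simp add: path_space_def W_def)
  ultimately obtain V0 V1 \<epsilon> where "open V0" "open V1" "0 < \<epsilon>" "\<epsilon> \<le> 1/2"
    and \<alpha>0: "\<alpha> ` {0..\<epsilon>} \<subseteq> V0" and \<alpha>1: "\<alpha> ` {1-\<epsilon>..1} \<subseteq> V1"
    and inM: "\<And>g. path g \<Longrightarrow> g ` {0..\<epsilon>} \<subseteq> V0 \<Longrightarrow> g ` {1-\<epsilon>..1} \<subseteq> V1 \<Longrightarrow>
          (\<And>t. \<epsilon> \<le> t \<Longrightarrow> t \<le> 1 - \<epsilon> \<Longrightarrow> g t = \<alpha> t) \<Longrightarrow> g \<in> W"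
    using assms(2) compact_open_path_nbhd_near_ends by metis
  have "Nbhd \<alpha> V1 V0 \<subseteq> M"
  proof
    fix p assume "p \<in> Nbhd \<alpha> V1 V0"
    then obtain \<delta> \<theta> where p: "p = path_class ((\<theta> +++ \<alpha>) +++ \<delta>)"
      and \<delta>: "path \<delta>" "path_image \<delta> \<subseteq> V1" "pathstart \<delta> = pathfinish \<alpha>"
      and \<theta>: "path \<theta>" "path_image \<theta> \<subseteq> V0" "pathfinish \<theta> = pathstart \<alpha>"
      unfolding Nbhd_def by blast
    define g where "g = ((\<theta> +++ \<alpha>) +++ \<delta>) \<circ> end_stretch \<epsilon>"
    have hom: "homotopic_paths UNIV ((\<theta> +++ \<alpha>) +++ \<delta>) g"
      unfolding g_def using \<open>0 < \<epsilon>\<close> \<open>\<epsilon> \<le> 1/2\<close> \<delta> \<theta> assms(2)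
      by (intro homotopic_paths_end_stretch) auto
    have "path g"
      using homotopic_paths_imp_path[OF hom] by blast
    moreover have "p = path_class g"
      using p path_class_eq_if_homotopic[OF hom] by simp
    moreover have "g ` {0..\<epsilon>} \<subseteq> V0"
    proof (rule image_subsetI)
      fix t assume "t \<in> {0..\<epsilon>}"
      then have "g t \<in> path_image \<theta> \<union> \<alpha> ` {0..\<epsilon>}"
        unfolding g_def using joinpaths3_end_stretch_left[OF \<open>0 < \<epsilon>\<close> \<open>\<epsilon> \<le> 1/2\<close>, of t] by simp
      then show "g t \<in> V0"
        using \<theta>(2) \<alpha>0 by blast
    qed
    moreover have "g ` {1-\<epsilon>..1} \<subseteq> V1"
    proof (rule image_subsetI)
      fix t assume "t \<in> {1-\<epsilon>..1}"
      then have "g t \<in> \<alpha> ` {1-\<epsilon>..1} \<union> path_image \<delta>"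
        unfolding g_def using joinpaths3_end_stretch_right[OF \<open>0 < \<epsilon>\<close> \<open>\<epsilon> \<le> 1/2\<close>, of t] by simp
      then show "g t \<in> V1"
        using \<delta>(2) \<alpha>1 by blast
    qed
    moreover have "g t = \<alpha> t" if "\<epsilon> \<le> t" "t \<le> 1 - \<epsilon>" for t
      using joinpaths3_end_stretch_middle[OF that \<open>0 < \<epsilon>\<close>] unfolding g_def by simp
    ultimately show "p \<in> M"
      using inM[of g] by (simp add: W_def)
  qed
  moreover have "\<alpha> 0 \<in> V0" "\<alpha> 1 \<in> V1"
    using \<alpha>0 \<alpha>1 \<open>0 < \<epsilon>\<close> by auto
  ultimately show ?thesis
    using \<open>open V0\<close> \<open>open V1\<close> by blast
qed

lemma rel_inessential_subset: "rel_inessential V \<Longrightarrow> W \<subseteq> V \<Longrightarrow> rel_inessential W"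
  unfolding rel_inessential_def by blast

lemma Nbhd_mono: "U \<subseteq> U' \<Longrightarrow> V \<subseteq> V' \<Longrightarrow> Nbhd g U V \<subseteq> Nbhd g U' V'"
  unfolding Nbhd_def by blast

lemma path_class_in_Nbhd:
  fixes \<alpha> :: "real \<Rightarrow> 'a::topological_space"
  assumes "path \<alpha>" "\<alpha> 1 \<in> U" "\<alpha> 0 \<in> V"
  shows "path_class \<alpha> \<in> Nbhd \<alpha> U V"
proof -
  define f :: "real \<Rightarrow> real" where "f t = min 1 (max 0 (4 * t - 1))" for t
  have "homotopic_paths UNIV \<alpha> (((\<lambda>t. \<alpha> 0) +++ \<alpha>) +++ (\<lambda>t. \<alpha> 1))"
  proof (rule homotopic_paths_reparametrize[where f = f])
    show "continuous_on {0..1} f"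
      unfolding f_def[abs_def] by (intro continuous_intros)
    show "(((\<lambda>t. \<alpha> 0) +++ \<alpha>) +++ (\<lambda>t. \<alpha> 1)) t = \<alpha> (f t)" for t
      by (simp add: joinpaths3_apply f_def)
  qed (use assms(1) in \<open>auto simp: f_def\<close>)
  then have "path_class \<alpha> = path_class (((\<lambda>t. \<alpha> 0) +++ \<alpha>) +++ (\<lambda>t. \<alpha> 1))"
    by (rule path_class_eq_if_homotopic)
  moreover have "path (\<lambda>t. a)" for a :: 'a
    by (simp add: path_def)
  ultimately show ?thesis
    unfolding Nbhd_def using assms(2,3)
    by (intro CollectI exI[of _ "\<lambda>t. \<alpha> 1"] exI[of _ "\<lambda>t. \<alpha> 0"])
       (simp add: pathstart_def pathfinish_def)
qed

lemma path_connected_rel_inessential_nbhd: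
  assumes "locally path_connected (UNIV :: 'a::topological_space set)"
    and "semilocally_simply_connected TYPE('a)" "open V" "(x :: 'a) \<in> V"
  obtains U where "open U" "x \<in> U" "U \<subseteq> V" "path_connected U" "rel_inessential U"
proof -
  obtain W where W: "open W" "x \<in> W" "rel_inessential W"
    using assms(2) unfolding semilocally_simply_connected_def by blast
  let ?U = "path_component_set (V \<inter> W) x"
  have "?U \<subseteq> V \<inter> W"
    by (rule path_component_subset)
  show thesis
  proof
    show "open ?U"
      using locally_path_connected_2[OF assms(1), of "V \<inter> W" x] W assms(3,4) by (simp add: open_Int)
    show "x \<in> ?U"
      using W assms(4) by (simp add: path_component_refl)
    show "?U \<subseteq> V"
      using \<open>?U \<subseteq> V \<inter> W\<close> by blast
    show "rel_inessential ?U"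
      using rel_inessential_subset[OF W(3)] \<open>?U \<subseteq> V \<inter> W\<close> by blast
  qed simp
qed

lemma openin_UC_topologyI:
  fixes M :: "(real \<Rightarrow> 'a::topological_space) set set"
  assumes "locally path_connected (UNIV :: 'a set)" "semilocally_simply_connected TYPE('a)"
    and "M \<subseteq> Pi1"
    and "\<And>\<alpha>. path \<alpha> \<Longrightarrow> path_class \<alpha> \<in> M \<Longrightarrow>
          \<exists>V1 V0. open V1 \<and> \<alpha> 1 \<in> V1 \<and> open V0 \<and> \<alpha> 0 \<in> V0 \<and> Nbhd \<alpha> V1 V0 \<subseteq> M"
  shows "openin UC_topology M"
proof (subst openin_subopen, intro ballI)
  fix p assume "p \<in> M"
  then obtain \<alpha> where "path \<alpha>" and p: "p = path_class \<alpha>"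
    using assms(3) by (auto simp: Pi1_def)
  then obtain V1 V0 where "open V1" "\<alpha> 1 \<in> V1" "open V0" "\<alpha> 0 \<in> V0" "Nbhd \<alpha> V1 V0 \<subseteq> M"
    using assms(4) \<open>p \<in> M\<close> by blast
  obtain U1 where U1: "open U1" "\<alpha> 1 \<in> U1" "U1 \<subseteq> V1" "path_connected U1" "rel_inessential U1"
    using path_connected_rel_inessential_nbhd[OF assms(1,2) \<open>open V1\<close> \<open>\<alpha> 1 \<in> V1\<close>] by blast
  obtain U0 where U0: "open U0" "\<alpha> 0 \<in> U0" "U0 \<subseteq> V0" "path_connected U0" "rel_inessential U0"
    using path_connected_rel_inessential_nbhd[OF assms(1,2) \<open>open V0\<close> \<open>\<alpha> 0 \<in> V0\<close>] by blast
  have "openin UC_topology (Nbhd \<alpha> U1 U0)"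
    unfolding UC_topology_def using \<open>path \<alpha>\<close> U1 U0
    by (intro topology_generated_by_Basis) (auto simp: pathstart_def pathfinish_def)
  moreover have "p \<in> Nbhd \<alpha> U1 U0"
    unfolding p using \<open>path \<alpha>\<close> U1(2) U0(2) by (rule path_class_in_Nbhd)
  moreover have "Nbhd \<alpha> U1 U0 \<subseteq> M"
    using Nbhd_mono[OF U1(3) U0(3)] \<open>Nbhd \<alpha> V1 V0 \<subseteq> M\<close> by blast
  ultimately show "\<exists>T. openin UC_topology T \<and> p \<in> T \<and> T \<subseteq> M"
    by blast
qed

theorem lemma2p3:
  assumes "locally path_connected (UNIV :: 'a::topological_space set)"
    and "semilocally_simply_connected TYPE('a)"
    and "CO'_open (M :: (real \<Rightarrow> 'a) set set)"
  shows "openin UC_topology M \<and>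
    (\<forall>\<alpha>. path \<alpha> \<and> path_class \<alpha> \<in> M \<longrightarrow>
       (\<exists>V1 V0. open V1 \<and> \<alpha> 1 \<in> V1 \<and> open V0 \<and> \<alpha> 0 \<in> V0 \<and> Nbhd \<alpha> V1 V0 \<subseteq> M))"
proof
  have "M \<subseteq> Pi1"
    using assms(3) by (simp add: CO'_open_def)
  then show "openin UC_topology M"
    using openin_UC_topologyI[OF assms(1,2)] CO'_open_imp_Nbhd_subset[OF assms(3)] by blast
  show "\<forall>\<alpha>. path \<alpha> \<and> path_class \<alpha> \<in> M \<longrightarrow>
       (\<exists>V1 V0. open V1 \<and> \<alpha> 1 \<in> V1 \<and> open V0 \<and> \<alpha> 0 \<in> V0 \<and> Nbhd \<alpha> V1 V0 \<subseteq> M)"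
    using CO'_open_imp_Nbhd_subset[OF assms(3)] by blast
qed

end
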